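(* Assume the matching setting described in the context. Let $M=\{e_1,\ldots,e_k\}$ be a matching and $\sigma_k\in\Omega$ with $M\subseteq\sigma_k$. Run the following procedure: for $i=k,k-1,\ldots,1$, choose an orientation $(u,v)$ of $e_i=\{u,v\}$; select $(u',v')\in\mathcal{N}_{\sigma_i}(u,v)\setminus\overrightarrow{\{e_1,\ldots,e_{i-1}\}}$ uniformly at random; set $\sigma_{i-1}=\mathrm{Swap}_{\sigma_i}((u,v),(u',v'))$. Output $\sigma_0$. Then: (1) the procedure is well defined, in the sense that $e_i\in\sigma_i$ at iteration $i$; (2) it can output $\sigma_0\in\Omega$ if and only if $\hat\psi(M,\sigma_0)=\sigma_k$; (3) distinct executions, i.e. executions differing in the choice of $(u',v')$ for some $i$, produce distinct outputs.
   Context: Let $G=(V,E)$ be an undirected graph with $|V|=2n$ of one of the following two types: [P1] $G$ is the complete graph on $V$; [P2] $V$ is partitioned into sets $A_1,B_1,\ldots,A_r,B_r$ with $|A_i|=|B_i|$ and $E=\{\{u,v\}:u\in A_i,v\in B_i,i\in[r]\}$. In both cases, whenever $(u',u,v,v')$ is a path in $G$ with distinct nodes, $\{u',v'\}\in E$. $\Omega$ is the set of perfect matchings of $G$ (sets of edges). For a single edge $e=\{u,v\}$ and $\sigma\in\Omega$, let $u',v'$ be the nodes with $\{u,u'\},\{v,v'\}\in\sigma$, and set $\hat\psi(\{e\},\sigma)=(\sigma\setminus\{\{u,u'\},\{v,v'\}\})\cup\{\{u,v\},\{u',v'\}\}$. For a matching $M=\{e_1,\ldots,e_k\}$ set $\hat\psi(M,\sigma)=\sigma_k$,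 where $\sigma_0=\sigma$ and $\sigma_i=\hat\psi(\{e_i\},\sigma_{i-1})$; this is independent of the ordering of $M$. For $S\subseteq E$ let $\overrightarrow S=\{(u,v),(v,u):\{u,v\}\in S\}$. For $\sigma\in\Omega$ and $(u,v),(u',v')\in\overrightarrow\sigma$ let $$\mathrm{Swap}_\sigma((u,v),(u',v'))=(\sigma\setminus\{\{u,v\},\{u',v'\}\})\cup\{\{u,u'\},\{v,v'\}\},$$ and let $\mathcal{N}_\sigma(u,v)=\{(u',v')\in\overrightarrow\sigma:\mathrm{Swap}_\sigma((u,v),(u',v'))\in\Omega\}$. *)

theory Defs
  imports Main
begin

definition type_P1 :: "'a set \<Rightarrow> 'a set set \<Rightarrow> bool" where
  "type_P1 V E \<longleftrightarrow> E = {{u, v} | u v. u \<in> V \<and> v \<in> V \<and> u \<noteq> v}"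

definition type_P2 :: "'a set \<Rightarrow> 'a set set \<Rightarrow> bool" where
  "type_P2 V E \<longleftrightarrow> (\<exists>(r::nat) (A::nat \<Rightarrow> 'a set) (B::nat \<Rightarrow> 'a set).
      (\<Union>i\<in>{1..r}. A i \<union> B i) = V
    \<and> (\<forall>i\<in>{1..r}. \<forall>j\<in>{1..r}. A i \<inter> B j = {})
    \<and> (\<forall>i\<in>{1..r}. \<forall>j\<in>{1..r}. i \<noteq> j \<longrightarrow> A i \<inter> A j = {} \<and> B i \<inter> B j = {})
    \<and> (\<forall>i\<in>{1..r}. card (A i) = card (B i))
    \<and> E = {{u, v} | u v i. i \<in> {1..r} \<and> u \<in> A i \<and> v \<in> B i})"

definition perfect_matchings :: "'a set \<Rightarrow> 'a set set \<Rightarrow> 'a set set set" where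
  "perfect_matchings V E = {\<sigma>. \<sigma> \<subseteq> E \<and> (\<forall>v\<in>V. \<exists>!e. e \<in> \<sigma> \<and> v \<in> e)}"

definition partner :: "'a set set \<Rightarrow> 'a \<Rightarrow> 'a" where
  "partner \<sigma> u = (THE w. {u, w} \<in> \<sigma>)"

definition psi1 :: "'a set set \<Rightarrow> 'a set \<Rightarrow> 'a set set" where
  "psi1 \<sigma> e = (let u = (SOME u. u \<in> e); v = (SOME v. v \<in> e \<and> v \<noteq> u);
                    u' = partner \<sigma> u; v' = partner \<sigma> v
                in (\<sigma> - {{u, u'}, {v, v'}}) \<union> {{u, v}, {u', v'}})"

text \<open>psi_hat applied to the matching listed as [e_1, ..., e_k]: e_1 is processed first.\<close>
definition psi_hat :: "'a set list \<Rightarrow> 'a set set \<Rightarrow> 'a set set" where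
  "psi_hat es \<sigma> = fold (\<lambda>e s. psi1 s e) es \<sigma>"

definition arrows :: "'a set set \<Rightarrow> ('a \<times> 'a) set" where
  "arrows S = {(u, v). {u, v} \<in> S}"

definition Swap :: "'a set set \<Rightarrow> 'a \<times> 'a \<Rightarrow> 'a \<times> 'a \<Rightarrow> 'a set set" where
  "Swap \<sigma> a b = (case a of (u, v) \<Rightarrow> case b of (u', v') \<Rightarrow>
      (\<sigma> - {{u, v}, {u', v'}}) \<union> {{u, u'}, {v, v'}})"

definition Nbhd :: "'a set \<Rightarrow> 'a set set \<Rightarrow> 'a set set \<Rightarrow> 'a \<times> 'a \<Rightarrow> ('a \<times> 'a) set" where
  "Nbhd V E \<sigma> a = {b \<in> arrows \<sigma>. Swap \<sigma> a b \<in> perfect_matchings V E}"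

text \<open>ori i \<sigma> is the orientation of e_i chosen at iteration i when the current
  matching is \<sigma>; c i is the choice (u',v') at iteration i.
  traj ori c \<sigma>k k j is the state after j iterations, i.e. \<sigma>_(k-j).\<close>
fun traj :: "(nat \<Rightarrow> 'a set set \<Rightarrow> 'a \<times> 'a) \<Rightarrow> (nat \<Rightarrow> 'a \<times> 'a) \<Rightarrow> 'a set set \<Rightarrow> nat \<Rightarrow> nat \<Rightarrow> 'a set set" where
  "traj ori c \<sigma>k k 0 = \<sigma>k"
| "traj ori c \<sigma>k k (Suc j) =
     Swap (traj ori c \<sigma>k k j) (ori (k - j) (traj ori c \<sigma>k k j)) (c (k - j))"

definition sigma_at :: "(nat \<Rightarrow> 'a set set \<Rightarrow> 'a \<times> 'a) \<Rightarrow> (nat \<Rightarrow> 'a \<times> 'a) \<Rightarrow> 'a set set \<Rightarrow> nat \<Rightarrow> nat \<Rightarrow> 'a set set" where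
  "sigma_at ori c \<sigma>k k i = traj ori c \<sigma>k k (k - i)"

definition valid_run :: "'a set \<Rightarrow> 'a set set \<Rightarrow> (nat \<Rightarrow> 'a set) \<Rightarrow> nat \<Rightarrow>
    (nat \<Rightarrow> 'a set set \<Rightarrow> 'a \<times> 'a) \<Rightarrow> 'a set set \<Rightarrow> (nat \<Rightarrow> 'a \<times> 'a) \<Rightarrow> bool" where
  "valid_run V E e k ori \<sigma>k c \<longleftrightarrow>
     (\<forall>i\<in>{1..k}. c i \<in> Nbhd V E (sigma_at ori c \<sigma>k k i) (ori i (sigma_at ori c \<sigma>k k i))
                         - arrows (e ` {1..<i}))"

end

theory Submission
  imports Defs
begin

(*
  psi1 sigma {u,v} is itself a swap: it trades {u, partner u} and {v, partner v} for
  {u,v} and {partner u, partner v}.  Hence one step of psi-hat undoes one iteration of the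
  procedure, every run satisfies sigma_i = psi-hat(e_1..e_i) sigma_0, and the output
  determines all intermediate matchings; as the choice (u',v') at iteration i consists of
  the new partners of u and v in sigma_(i-1), it determines all choices too.  Conversely,
  for sigma_0 with psi-hat(M) sigma_0 = sigma_k the matchings psi-hat(e_1..e_i) sigma_0 are
  perfect (the path condition puts {partner u, partner v} into E) and are retraced by
  choosing those new partners, which avoid the arrows of e_1..e_(i-1) because the e_j are
  disjoint.
*)

lemma arrows_iff [simp]: "(a, b) \<in> arrows S \<longleftrightarrow> {a, b} \<in> S"
  by (simp add: arrows_def)

lemma Swap_eq: "Swap \<sigma> (u, v) (u', v') = (\<sigma> - {{u, v}, {u', v'}}) \<union> {{u, u'}, {v, v'}}"
  by (simp add: Swap_def)

lemma Swap_Swap: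
  assumes "{a, b} \<in> \<sigma>" "{c, d} \<in> \<sigma>" "{a, c} \<notin> \<sigma>" "{b, d} \<notin> \<sigma>"
  shows "Swap (Swap \<sigma> (a, b) (c, d)) (a, c) (b, d) = \<sigma>"
  using assms by (auto simp: Swap_eq)

lemma Swap_reverse: "{u, v} \<in> \<sigma> \<Longrightarrow> Swap \<sigma> (u, v) (v, u) = \<sigma>"
  by (auto simp: Swap_eq insert_commute)

lemma psi1_eq_Swap:
  assumes "u \<noteq> v"
  shows "psi1 \<sigma> {u, v} = Swap \<sigma> (u, partner \<sigma> u) (v, partner \<sigma> v)"
proof -
  have "(SOME x. x \<in> {u, v}) \<in> {u, v}" by (rule someI[of _ u]) simp
  then consider "(SOME x. x \<in> {u, v}) = u" | "(SOME x. x \<in> {u, v}) = v" by blast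
  then show ?thesis
  proof cases
    case 1
    have "(SOME y. y \<in> {u, v} \<and> y \<noteq> u) = v" using assms by (intro some_equality) auto
    then show ?thesis unfolding psi1_def Let_def 1 by (simp add: Swap_eq)
  next
    case 2
    have "(SOME y. y \<in> {u, v} \<and> y \<noteq> v) = u" using assms by (intro some_equality) auto
    then show ?thesis unfolding psi1_def Let_def 2 by (auto simp: Swap_eq insert_commute)
  qed
qed

lemma psi1_contains_edge: "u \<noteq> v \<Longrightarrow> {u, v} \<in> psi1 \<sigma> {u, v}"
  by (simp add: psi1_eq_Swap Swap_eq)

lemma psi1_keeps_disjoint_edge:
  "u \<noteq> v \<Longrightarrow> x \<in> \<sigma> \<Longrightarrow> x \<inter> {u, v} = {} \<Longrightarrow> x \<in> psi1 \<sigma> {u, v}"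
  by (auto simp: psi1_eq_Swap Swap_eq)

lemma psi_hat_snoc: "psi_hat (es @ [x]) \<sigma> = psi1 (psi_hat es \<sigma>) x"
  by (simp add: psi_hat_def)

lemma perfect_matchings_subset: "\<sigma> \<in> perfect_matchings V E \<Longrightarrow> \<sigma> \<subseteq> E"
  by (simp add: perfect_matchings_def)

locale path_closed_graph =
  fixes V :: "'a set" and E :: "'a set set"
  assumes edge_doubleton: "x \<in> E \<Longrightarrow> \<exists>a b. x = {a, b} \<and> a \<noteq> b \<and> a \<in> V \<and> b \<in> V"
    and path_closed: "\<lbrakk>{a, b} \<in> E; {b, c} \<in> E; {c, d} \<in> E; a \<noteq> d\<rbrakk> \<Longrightarrow> {a, d} \<in> E"

lemma type_P1_path_closed: "type_P1 V E \<Longrightarrow> path_closed_graph V E"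
  unfolding type_P1_def by unfold_locales (auto simp: doubleton_eq_iff)

lemma type_P2_path_closed:
  assumes "type_P2 V E" shows "path_closed_graph V E"
proof -
  obtain r A B where V: "(\<Union>i\<in>{1..r::nat}. A i \<union> B i) = V"
    and AB: "\<forall>i\<in>{1..r}. \<forall>j\<in>{1..r}. A i \<inter> B j = {}"
    and AA: "\<forall>i\<in>{1..r}. \<forall>j\<in>{1..r}. i \<noteq> j \<longrightarrow> A i \<inter> A j = {} \<and> B i \<inter> B j = {}"
    and E: "E = {{u, v} | u v i. i \<in> {1..r} \<and> u \<in> A i \<and> v \<in> B i}"
    using assms unfolding type_P2_def by blast
  have E_iff: "{x, y} \<in> E \<longleftrightarrow> (\<exists>i\<in>{1..r}. x \<in> A i \<and> y \<in> B i \<or> x \<in> B i \<and> y \<in> A i)" for x y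
    unfolding E by (auto simp: doubleton_eq_iff; blast)
  show ?thesis
  proof
    show "\<exists>a b. x = {a, b} \<and> a \<noteq> b \<and> a \<in> V \<and> b \<in> V" if "x \<in> E" for x
      using that AB V unfolding E by blast
  next
    fix a b c d
    assume ab: "{a, b} \<in> E" and bc: "{b, c} \<in> E" and cd: "{c, d} \<in> E"
    obtain i where i: "i \<in> {1..r}" "b \<in> A i \<and> c \<in> B i \<or> b \<in> B i \<and> c \<in> A i"
      using bc E_iff by blast
    \<comment> \<open>the blocks are disjoint, so all four vertices lie in block i, alternating sides\<close>
    have "a \<in> A i \<and> d \<in> B i \<or> a \<in> B i \<and> d \<in> A i"
      using i ab cd AB AA unfolding E_iff by (metis disjoint_iff)
    then show "{a, d} \<in> E" using i E_iff by blast
  qed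
qed

context path_closed_graph
begin

lemma edge_endpoints: "{a, b} \<in> E \<Longrightarrow> a \<noteq> b \<and> a \<in> V \<and> b \<in> V"
  using edge_doubleton[of "{a, b}"] by (auto simp: doubleton_eq_iff)

lemma matching_edge_endpoints:
  "\<sigma> \<in> perfect_matchings V E \<Longrightarrow> {a, b} \<in> \<sigma> \<Longrightarrow> a \<noteq> b \<and> a \<in> V \<and> b \<in> V"
  using perfect_matchings_subset edge_endpoints by blast

lemma matching_edges_eq:
  assumes "\<sigma> \<in> perfect_matchings V E" "x \<in> \<sigma>" "y \<in> \<sigma>" "w \<in> x" "w \<in> y"
  shows "x = y"
proof -
  have "w \<in> V" using assms edge_doubleton perfect_matchings_subset by blast
  then show ?thesis using assms unfolding perfect_matchings_def by blast
qed

lemma matching_mate_unique: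
  "\<sigma> \<in> perfect_matchings V E \<Longrightarrow> {a, b} \<in> \<sigma> \<Longrightarrow> {a, c} \<in> \<sigma> \<Longrightarrow> b = c"
  using matching_edges_eq[of \<sigma> "{a, b}" "{a, c}" a] by (auto simp: doubleton_eq_iff)

lemma partner_eq: "\<sigma> \<in> perfect_matchings V E \<Longrightarrow> {a, b} \<in> \<sigma> \<Longrightarrow> partner \<sigma> a = b"
  unfolding partner_def by (blast intro: the_equality dest: matching_mate_unique)

lemma partner_in_matching:
  assumes "\<sigma> \<in> perfect_matchings V E" "a \<in> V"
  shows "{a, partner \<sigma> a} \<in> \<sigma>"
proof -
  obtain x where "x \<in> \<sigma>" "a \<in> x" using assms unfolding perfect_matchings_def by blast
  moreover obtain b c where "x = {b, c}"
    using \<open>x \<in> \<sigma>\<close> assms(1) edge_doubleton perfect_matchings_subset by blast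
  ultimately have "{a, if a = b then c else b} \<in> \<sigma>" by (auto simp: insert_commute)
  then show ?thesis using partner_eq[OF assms(1)] by simp
qed

lemma Swap_perfect_matching:
  assumes \<sigma>: "\<sigma> \<in> perfect_matchings V E" and ab: "{a, b} \<in> \<sigma>" and cd: "{c, d} \<in> \<sigma>"
    and distinct: "a \<noteq> c" "a \<noteq> d" "b \<noteq> c" "b \<noteq> d"
    and new_edges: "{a, c} \<in> E" "{b, d} \<in> E"
  shows "Swap \<sigma> (a, b) (c, d) \<in> perfect_matchings V E"
proof -
  let ?S = "Swap \<sigma> (a, b) (c, d)"
  have S: "?S = (\<sigma> - {{a, b}, {c, d}}) \<union> {{a, c}, {b, d}}" by (rule Swap_eq)
  have "\<exists>!x. x \<in> ?S \<and> w \<in> x" if "w \<in> V" for w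
  proof (cases "w \<in> {a, b, c, d}")
    case True
    \<comment> \<open>the only old edges at w were {a,b} and {c,d}, both removed\<close>
    have "x \<notin> \<sigma> - {{a, b}, {c, d}}" if "w \<in> x" for x
      using True that matching_edges_eq[OF \<sigma> _ ab] matching_edges_eq[OF \<sigma> _ cd] by blast
    then have "(\<lambda>x. x \<in> ?S \<and> w \<in> x) = (\<lambda>x. x \<in> {{a, c}, {b, d}} \<and> w \<in> x)"
      unfolding S by blast
    moreover have "{a, c} \<inter> {b, d} = {}"
      using distinct matching_edge_endpoints[OF \<sigma> ab] matching_edge_endpoints[OF \<sigma> cd] by blast
    ultimately show ?thesis using True by auto
  next
    case False
    then have "(\<lambda>x. x \<in> ?S \<and> w \<in> x) = (\<lambda>x. x \<in> \<sigma> \<and> w \<in> x)"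
      unfolding S by auto
    then show ?thesis using \<sigma> \<open>w \<in> V\<close> unfolding perfect_matchings_def by simp
  qed
  moreover have "?S \<subseteq> E" using perfect_matchings_subset[OF \<sigma>] new_edges S by blast
  ultimately show ?thesis unfolding perfect_matchings_def by blast
qed

lemma psi1_matching_edge:
  assumes "\<sigma> \<in> perfect_matchings V E" "{u, v} \<in> \<sigma>"
  shows "psi1 \<sigma> {u, v} = \<sigma>"
proof -
  have "partner \<sigma> u = v" "partner \<sigma> v = u"
    using partner_eq[OF assms(1)] assms(2) by (auto simp: insert_commute)
  then show ?thesis
    using assms Swap_reverse matching_edge_endpoints by (simp add: psi1_eq_Swap)
qed

lemma psi1_Swap:
  assumes \<sigma>: "\<sigma> \<in> perfect_matchings V E" and uv: "{u, v} \<in> \<sigma>" and uv': "{u', v'} \<in> \<sigma>"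
    and S: "Swap \<sigma> (u, v) (u', v') \<in> perfect_matchings V E"
  shows "psi1 (Swap \<sigma> (u, v) (u', v')) {u, v} = \<sigma>"
proof (cases "{u', v'} = {u, v}")
  case True
  have "u' \<noteq> u" using matching_edge_endpoints[OF S, of u u'] by (auto simp: Swap_eq)
  then have "u' = v" "v' = u" using True by (auto simp: doubleton_eq_iff)
  then show ?thesis using psi1_matching_edge[OF \<sigma> uv] Swap_reverse[OF uv] by simp
next
  case False
  have "u' \<notin> {u, v}" "v' \<notin> {u, v}"
    using False matching_edges_eq[OF \<sigma> uv uv'] by blast+
  then have "{u, u'} \<notin> \<sigma>" "{v, v'} \<notin> \<sigma>"
    using matching_edges_eq[OF \<sigma> _ uv] by (metis insertCI)+
  moreover have "partner (Swap \<sigma> (u, v) (u', v')) u = u'" "partner (Swap \<sigma> (u, v) (u', v')) v = v'"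
    using partner_eq[OF S] by (simp_all add: Swap_eq)
  ultimately show ?thesis
    using Swap_Swap[OF uv uv'] matching_edge_endpoints[OF \<sigma> uv] by (simp add: psi1_eq_Swap)
qed

lemma psi1_perfect_matching_and_inverse:
  assumes \<tau>: "\<tau> \<in> perfect_matchings V E" and uv: "{u, v} \<in> E"
  defines "p \<equiv> partner \<tau> u" and "q \<equiv> partner \<tau> v"
  shows "psi1 \<tau> {u, v} \<in> perfect_matchings V E"
    and "Swap (psi1 \<tau> {u, v}) (u, v) (p, q) = \<tau>"
proof -
  have "u \<noteq> v" "u \<in> V" "v \<in> V" using edge_endpoints[OF uv] by auto
  have up: "{u, p} \<in> \<tau>" and vq: "{v, q} \<in> \<tau>"
    unfolding p_def q_def using partner_in_matching[OF \<tau>] \<open>u \<in> V\<close> \<open>v \<in> V\<close> by auto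
  have psi1: "psi1 \<tau> {u, v} = Swap \<tau> (u, p) (v, q)"
    using psi1_eq_Swap[OF \<open>u \<noteq> v\<close>] unfolding p_def q_def .
  have "psi1 \<tau> {u, v} \<in> perfect_matchings V E \<and> Swap (psi1 \<tau> {u, v}) (u, v) (p, q) = \<tau>"
  proof (cases "{u, v} \<in> \<tau>")
    case True
    then have "p = v" "q = u" using up vq matching_mate_unique[OF \<tau>] by (metis insert_commute)+
    then show ?thesis using \<tau> True psi1_matching_edge[OF \<tau> True] Swap_reverse by simp
  next
    case False
    have "p \<noteq> v" "q \<noteq> u" using False up vq by (auto simp: insert_commute)
    moreover have "p \<noteq> q" using up vq \<open>u \<noteq> v\<close> matching_mate_unique[OF \<tau>] by (metis insert_commute)
    moreover have pq: "{p, q} \<in> E"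
      using path_closed[of p u v q] up vq uv perfect_matchings_subset[OF \<tau>] \<open>p \<noteq> q\<close>
      by (auto simp: insert_commute)
    moreover have "{p, q} \<notin> \<tau>" using up \<open>q \<noteq> u\<close> matching_mate_unique[OF \<tau>] by (metis insert_commute)
    ultimately show ?thesis
      using Swap_perfect_matching[OF \<tau> up vq] Swap_Swap[OF up vq False] \<open>u \<noteq> v\<close> uv psi1 by simp
  qed
  then show "psi1 \<tau> {u, v} \<in> perfect_matchings V E" "Swap (psi1 \<tau> {u, v}) (u, v) (p, q) = \<tau>"
    by simp_all
qed

end

lemma sigma_at_top: "sigma_at ori c \<sigma>k k k = \<sigma>k"
  by (simp add: sigma_at_def)

lemma sigma_at_step:
  assumes "i < k"
  shows "sigma_at ori c \<sigma>k k i
    = Swap (sigma_at ori c \<sigma>k k (Suc i)) (ori (Suc i) (sigma_at ori c \<sigma>k k (Suc i))) (c (Suc i))"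
proof -
  have "k - i = Suc (k - Suc i)" "k - (k - Suc i) = Suc i" using assms by simp_all
  then show ?thesis by (simp add: sigma_at_def)
qed

definition trajectory_choice ::
    "(nat \<Rightarrow> 'a set set \<Rightarrow> 'a \<times> 'a) \<Rightarrow> (nat \<Rightarrow> 'a set set) \<Rightarrow> nat \<Rightarrow> 'a \<times> 'a" where
  "trajectory_choice ori \<tau> i = map_prod (partner (\<tau> (i - 1))) (partner (\<tau> (i - 1))) (ori i (\<tau> i))"

locale swap_procedure = path_closed_graph +
  fixes e :: "nat \<Rightarrow> 'a set" and k :: nat and \<sigma>k :: "'a set set"
    and ori :: "nat \<Rightarrow> 'a set set \<Rightarrow> 'a \<times> 'a"
  assumes e_disjoint: "\<lbrakk>i \<in> {1..k}; j \<in> {1..k}; i \<noteq> j\<rbrakk> \<Longrightarrow> e i \<inter> e j = {}"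
    and \<sigma>k_perfect: "\<sigma>k \<in> perfect_matchings V E"
    and e_in_\<sigma>k: "i \<in> {1..k} \<Longrightarrow> e i \<in> \<sigma>k"
    and ori_orients: "i \<in> {1..k} \<Longrightarrow> ori i \<sigma> \<in> arrows {e i}"
begin

abbreviation state :: "(nat \<Rightarrow> 'a \<times> 'a) \<Rightarrow> nat \<Rightarrow> 'a set set" where
  "state c \<equiv> sigma_at ori c \<sigma>k k"

abbreviation prefix_image :: "'a set set \<Rightarrow> nat \<Rightarrow> 'a set set" where
  "prefix_image \<sigma>0 i \<equiv> psi_hat (map e [1..<Suc i]) \<sigma>0"

lemma e_edge: "i \<in> {1..k} \<Longrightarrow> e i \<in> E"
  using e_in_\<sigma>k \<sigma>k_perfect perfect_matchings_subset by blast

lemma orientation: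
  assumes "i \<in> {1..k}"
  shows "\<exists>u v. ori i \<sigma> = (u, v) \<and> e i = {u, v} \<and> u \<noteq> v"
proof -
  obtain u v where "ori i \<sigma> = (u, v)" "e i = {u, v}"
    using ori_orients[OF assms, of \<sigma>] by (cases "ori i \<sigma>") auto
  then show ?thesis using e_edge[OF assms] edge_endpoints by auto
qed

lemma e_distinct: "\<lbrakk>i \<in> {1..k}; j \<in> {1..k}; i \<noteq> j\<rbrakk> \<Longrightarrow> e i \<noteq> e j"
  using e_disjoint orientation by (metis inf.idem insert_not_empty)

lemma valid_run_step:
  assumes "valid_run V E e k ori \<sigma>k c" "i < k"
    and "ori (Suc i) (state c (Suc i)) = (u, v)" "c (Suc i) = (a, b)"
  shows "{a, b} \<in> state c (Suc i)" "{a, b} \<notin> e ` {1..i}"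
    and "state c i = Swap (state c (Suc i)) (u, v) (a, b)" "state c i \<in> perfect_matchings V E"
  using assms sigma_at_step[OF \<open>i < k\<close>, of ori c]
  by (auto simp: valid_run_def Nbhd_def dest!: bspec[of _ _ "Suc i"])

lemma run_invariant:
  assumes "valid_run V E e k ori \<sigma>k c" "i \<le> k"
  shows "state c i \<in> perfect_matchings V E \<and> (\<forall>j\<in>{1..i}. e j \<in> state c i)"
  using \<open>i \<le> k\<close>
proof (induction i rule: inc_induct)
  case base
  show ?case using \<sigma>k_perfect e_in_\<sigma>k by (auto simp: sigma_at_top)
next
  case (step i)
  obtain u v where uv: "ori (Suc i) (state c (Suc i)) = (u, v)" "e (Suc i) = {u, v}"
    using orientation[of "Suc i" "state c (Suc i)"] step.hyps by auto
  obtain a b where ab: "c (Suc i) = (a, b)" by fastforce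
  note run = valid_run_step[OF assms(1) step.hyps(2) uv(1) ab]
  have "e j \<in> state c i" if "j \<in> {1..i}" for j
  proof -
    have "e j \<noteq> {u, v}" using e_distinct[of j "Suc i"] uv(2) that step.hyps by auto
    moreover have "e j \<noteq> {a, b}" using run(2) that by auto
    ultimately show ?thesis using step.IH that by (auto simp: run(3) Swap_eq)
  qed
  then show ?case using run(4) by blast
qed

lemma psi1_run_step:
  assumes "valid_run V E e k ori \<sigma>k c" "i < k"
  shows "psi1 (state c i) (e (Suc i)) = state c (Suc i)"
proof -
  obtain u v where uv: "ori (Suc i) (state c (Suc i)) = (u, v)" "e (Suc i) = {u, v}"
    using orientation[of "Suc i" "state c (Suc i)"] assms(2) by auto
  obtain a b where ab: "c (Suc i) = (a, b)" by fastforce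
  note run = valid_run_step[OF assms uv(1) ab]
  have "state c (Suc i) \<in> perfect_matchings V E" "e (Suc i) \<in> state c (Suc i)"
    using run_invariant[OF assms(1), of "Suc i"] assms(2) by auto
  then show ?thesis using psi1_Swap run uv(2) by simp
qed

lemma psi_hat_run:
  assumes "valid_run V E e k ori \<sigma>k c" "i \<le> k"
  shows "prefix_image (state c 0) i = state c i"
  using \<open>i \<le> k\<close>
proof (induction i)
  case (Suc i)
  then show ?case using psi1_run_step[OF assms(1)] by (simp add: psi_hat_snoc)
qed (simp add: psi_hat_def)

lemma run_choice:
  assumes "valid_run V E e k ori \<sigma>k c" "i < k"
  shows "c (Suc i) = trajectory_choice ori (state c) (Suc i)"
proof -
  obtain u v where uv: "ori (Suc i) (state c (Suc i)) = (u, v)"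
    using orientation[of "Suc i" "state c (Suc i)"] assms(2) by auto
  obtain a b where ab: "c (Suc i) = (a, b)" by fastforce
  note run = valid_run_step[OF assms uv ab]
  have "partner (state c i) u = a" "partner (state c i) v = b"
    using partner_eq[OF run(4)] by (simp_all add: run(3) Swap_eq)
  then show ?thesis by (simp add: trajectory_choice_def uv ab)
qed

lemma run_determined_by_output:
  assumes "valid_run V E e k ori \<sigma>k c" "valid_run V E e k ori \<sigma>k c'"
    and "state c 0 = state c' 0" "i \<in> {1..k}"
  shows "c i = c' i"
proof -
  have "state c j = state c' j" if "j \<le> k" for j
    using psi_hat_run[OF assms(1) that] psi_hat_run[OF assms(2) that] assms(3) by simp
  moreover obtain j where "i = Suc j" "j < k" using assms(4) by (cases i) auto
  ultimately show ?thesis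
    using run_choice[OF assms(1), of j] run_choice[OF assms(2), of j]
    by (simp add: trajectory_choice_def)
qed

lemma prefix_image_invariant:
  assumes "\<sigma>0 \<in> perfect_matchings V E" "i \<le> k"
  shows "prefix_image \<sigma>0 i \<in> perfect_matchings V E \<and> (\<forall>j\<in>{1..i}. e j \<in> prefix_image \<sigma>0 i)"
  using \<open>i \<le> k\<close>
proof (induction i)
  case 0
  then show ?case using assms(1) by (simp add: psi_hat_def)
next
  case (Suc i)
  obtain u v where uv: "e (Suc i) = {u, v}" "u \<noteq> v" "{u, v} \<in> E"
    using edge_doubleton e_edge[of "Suc i"] Suc.prems by force
  have IH: "prefix_image \<sigma>0 i \<in> perfect_matchings V E" "\<forall>j\<in>{1..i}. e j \<in> prefix_image \<sigma>0 i"
    using Suc by auto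
  moreover have "e j \<inter> {u, v} = {}" if "j \<in> {1..i}" for j
    using e_disjoint[of j "Suc i"] uv that Suc.prems by auto
  ultimately show ?case
    using psi1_perfect_matching_and_inverse(1)[OF IH(1) uv(3)] psi1_contains_edge[OF uv(2)]
      psi1_keeps_disjoint_edge[OF uv(2)] IH(2) uv(1)
    by (auto simp: psi_hat_snoc le_Suc_eq)
qed

lemma prefix_image_step:
  assumes "\<sigma>0 \<in> perfect_matchings V E" "i < k"
  shows "Swap (prefix_image \<sigma>0 (Suc i)) (ori (Suc i) (prefix_image \<sigma>0 (Suc i)))
           (trajectory_choice ori (prefix_image \<sigma>0) (Suc i)) = prefix_image \<sigma>0 i"
    and "trajectory_choice ori (prefix_image \<sigma>0) (Suc i)
           \<in> Nbhd V E (prefix_image \<sigma>0 (Suc i)) (ori (Suc i) (prefix_image \<sigma>0 (Suc i)))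
             - arrows (e ` {1..i})"
proof -
  define \<tau> where "\<tau> = prefix_image \<sigma>0"
  obtain u v where uv: "ori (Suc i) (\<tau> (Suc i)) = (u, v)" "e (Suc i) = {u, v}"
    using orientation[of "Suc i" "\<tau> (Suc i)"] assms(2) by auto
  define p q where "p = partner (\<tau> i) u" and "q = partner (\<tau> i) v"
  have inv: "\<tau> i \<in> perfect_matchings V E" "\<forall>j\<in>{1..i}. e j \<in> \<tau> i"
    using prefix_image_invariant[OF assms(1), of i] assms(2) unfolding \<tau>_def by auto
  have uvE: "{u, v} \<in> E" using uv(2) e_edge[of "Suc i"] assms(2) by auto
  have \<tau>_Suc: "\<tau> (Suc i) = psi1 (\<tau> i) {u, v}" using uv(2) by (simp add: \<tau>_def psi_hat_snoc)
  have c: "trajectory_choice ori \<tau> (Suc i) = (p, q)"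
    by (simp add: trajectory_choice_def uv(1) p_def q_def)
  have swap: "Swap (\<tau> (Suc i)) (u, v) (p, q) = \<tau> i"
    using psi1_perfect_matching_and_inverse(2)[OF inv(1) uvE] \<tau>_Suc by (simp add: p_def q_def)
  then have "Swap (\<tau> (Suc i)) (ori (Suc i) (\<tau> (Suc i))) (trajectory_choice ori \<tau> (Suc i)) = \<tau> i"
    by (simp add: uv(1) c)
  then show "Swap (prefix_image \<sigma>0 (Suc i)) (ori (Suc i) (prefix_image \<sigma>0 (Suc i)))
           (trajectory_choice ori (prefix_image \<sigma>0) (Suc i)) = prefix_image \<sigma>0 i"
    unfolding \<tau>_def .
  have up: "{u, p} \<in> \<tau> i"
    using partner_in_matching[OF inv(1)] edge_endpoints[OF uvE] by (simp add: p_def)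
  \<comment> \<open>an edge {p,q} = e j would be the edge {u,p} of \<tau> i through p, so e j would meet e (Suc i) in u\<close>
  have "{p, q} \<notin> e ` {1..i}"
  proof
    assume "{p, q} \<in> e ` {1..i}"
    then obtain j where j: "j \<in> {1..i}" "e j = {p, q}" by auto
    moreover from j have "e j \<in> \<tau> i" using inv(2) by blast
    ultimately have "e j = {u, p}" using matching_edges_eq[OF inv(1) _ up, of "e j" p] by simp
    then show False using e_disjoint[of j "Suc i"] j uv(2) assms(2) by auto
  qed
  moreover have "{p, q} \<in> \<tau> (Suc i)"
    using edge_endpoints[OF uvE] by (simp add: \<tau>_Suc psi1_eq_Swap Swap_eq p_def q_def)
  ultimately have "trajectory_choice ori \<tau> (Suc i)
      \<in> Nbhd V E (\<tau> (Suc i)) (ori (Suc i) (\<tau> (Suc i))) - arrows (e ` {1..i})"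
    using swap inv(1) by (auto simp: Nbhd_def c uv(1))
  then show "trajectory_choice ori (prefix_image \<sigma>0) (Suc i)
           \<in> Nbhd V E (prefix_image \<sigma>0 (Suc i)) (ori (Suc i) (prefix_image \<sigma>0 (Suc i)))
             - arrows (e ` {1..i})"
    unfolding \<tau>_def .
qed

lemma run_from_psi_hat:
  assumes "\<sigma>0 \<in> perfect_matchings V E" "prefix_image \<sigma>0 k = \<sigma>k"
  shows "\<exists>c. valid_run V E e k ori \<sigma>k c \<and> state c 0 = \<sigma>0"
proof -
  define c where "c = trajectory_choice ori (prefix_image \<sigma>0)"
  have state: "state c i = prefix_image \<sigma>0 i" if "i \<le> k" for i
    using that
  proof (induction i rule: inc_induct)
    case base
    show ?case using assms(2) by (simp add: sigma_at_top)
  next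
    case (step i)
    have "state c i = Swap (state c (Suc i)) (ori (Suc i) (state c (Suc i))) (c (Suc i))"
      by (rule sigma_at_step[OF step.hyps(2)])
    also have "\<dots> = prefix_image \<sigma>0 i"
      unfolding step.IH unfolding c_def by (rule prefix_image_step(1)[OF assms(1) step.hyps(2)])
    finally show ?case .
  qed
  have "valid_run V E e k ori \<sigma>k c"
    unfolding valid_run_def
  proof
    fix i assume "i \<in> {1..k}"
    then obtain j where "i = Suc j" "j < k" by (cases i) auto
    then show "c i \<in> Nbhd V E (state c i) (ori i (state c i)) - arrows (e ` {1..<i})"
      using prefix_image_step(2)[OF assms(1), of j] state[of i] by (simp add: c_def atLeastLessThanSuc_atLeastAtMost)
  qed
  moreover have "state c 0 = \<sigma>0" using state[of 0] by (simp add: psi_hat_def)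
  ultimately show ?thesis by blast
qed

end

theorem proposition7:
  fixes V :: "'a set" and E :: "'a set set" and n k :: nat
    and e :: "nat \<Rightarrow> 'a set" and \<sigma>k :: "'a set set"
    and ori :: "nat \<Rightarrow> 'a set set \<Rightarrow> 'a \<times> 'a"
  assumes "finite V" and "card V = 2 * n"
    and "type_P1 V E \<or> type_P2 V E"
    and "\<forall>i\<in>{1..k}. e i \<in> E"
    and "\<forall>i\<in>{1..k}. \<forall>j\<in>{1..k}. i \<noteq> j \<longrightarrow> e i \<inter> e j = {}"
    and "\<sigma>k \<in> perfect_matchings V E"
    and "e ` {1..k} \<subseteq> \<sigma>k"
    and "\<forall>i\<in>{1..k}. \<forall>\<sigma>. ori i \<sigma> \<in> arrows {e i}"
  shows "(\<forall>c. valid_run V E e k ori \<sigma>k c \<longrightarrow>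
            (\<forall>i\<in>{1..k}. e i \<in> sigma_at ori c \<sigma>k k i))
       \<and> (\<forall>\<sigma>0\<in>perfect_matchings V E.
            (\<exists>c. valid_run V E e k ori \<sigma>k c \<and> sigma_at ori c \<sigma>k k 0 = \<sigma>0)
            \<longleftrightarrow> psi_hat (map e [1..<k+1]) \<sigma>0 = \<sigma>k)
       \<and> (\<forall>c c'. valid_run V E e k ori \<sigma>k c \<and> valid_run V E e k ori \<sigma>k c'
            \<and> (\<exists>i\<in>{1..k}. c i \<noteq> c' i)
            \<longrightarrow> sigma_at ori c \<sigma>k k 0 \<noteq> sigma_at ori c' \<sigma>k k 0)"
proof -
  interpret path_closed_graph V E
    using assms(3) type_P1_path_closed type_P2_path_closed by blast
  interpret swap_procedure V E e k \<sigma>k ori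
    by unfold_locales (use assms(5-8) in auto)
  have "e i \<in> sigma_at ori c \<sigma>k k i" if "valid_run V E e k ori \<sigma>k c" "i \<in> {1..k}" for c i
    using run_invariant[OF that(1), of i] that(2) by auto
  moreover have "(\<exists>c. valid_run V E e k ori \<sigma>k c \<and> sigma_at ori c \<sigma>k k 0 = \<sigma>0)
      \<longleftrightarrow> psi_hat (map e [1..<k+1]) \<sigma>0 = \<sigma>k" if "\<sigma>0 \<in> perfect_matchings V E" for \<sigma>0
    using psi_hat_run[OF _ order.refl] run_from_psi_hat[OF that] sigma_at_top[of ori _ \<sigma>k k]
    by (metis Suc_eq_plus1)
  moreover have "sigma_at ori c \<sigma>k k 0 \<noteq> sigma_at ori c' \<sigma>k k 0"
    if "valid_run V E e k ori \<sigma>k c" "valid_run V E e k ori \<sigma>k c'" "c i \<noteq> c' i" "i \<in> {1..k}"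
    for c c' i
    using run_determined_by_output[OF that(1,2) _ that(4)] that(3) by blast
  ultimately show ?thesis by (intro conjI allI ballI impI) (blast, blast, metis)
qed

end
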